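(* Let $C$ be an identifying code of $K_n\times K_m$. If $cs(C)=n-1$, then there is no column $C_j$ with $C\cap C_j=\{u,v\}$ (for distinct $u,v$) where both $u$ and $v$ are row-isolated in $C$. Similarly, if $rs(C)=m-1$, there is no row $R_r$ with $C\cap R_r=\{u,v\}$ (for distinct $u,v$) where both $u$ and $v$ are column-isolated in $C$.
   Context: $K_n\times K_m$ is the direct product of complete graphs: vertex set $[n]\times[m]$, with $(i,r)$ adjacent to $(j,s)$ iff $i\ne j$ and $r \ne s$. An identifying code is a dominating set $C$ with $N[x]\cap C\ne N[y]\cap C$ for all distinct vertices $x,y$ ($N[x]$ the closed neighborhood). Columns: $C_i=\{(i,t):t\in[m]\}$; rows: $R_r=\{(k,r):k\in[n]\}$. $cs(C)$ (resp. $rs(C)$) is the number of columns (resp. rows) meeting $C$. A vertex $v=(i,r)$ is column-isolated in $C$ if $C\cap C_i=\{v\}$ and row-isolated in $C$ if $C\cap R_r=\{v\}$. *)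

theory Defs
  imports Main
begin

definition verts :: "nat \<Rightarrow> nat \<Rightarrow> (nat \<times> nat) set" where
  "verts n m = {1..n} \<times> {1..m}"

definition adj :: "nat \<times> nat \<Rightarrow> nat \<times> nat \<Rightarrow> bool" where
  "adj x y \<longleftrightarrow> fst x \<noteq> fst y \<and> snd x \<noteq> snd y"

definition closed_nbhd :: "nat \<Rightarrow> nat \<Rightarrow> nat \<times> nat \<Rightarrow> (nat \<times> nat) set" where
  "closed_nbhd n m x = {y \<in> verts n m. y = x \<or> adj x y}"

definition is_identifying_code :: "nat \<Rightarrow> nat \<Rightarrow> (nat \<times> nat) set \<Rightarrow> bool" where
  "is_identifying_code n m C \<longleftrightarrow>
     C \<subseteq> verts n m \<and>
     (\<forall>x \<in> verts n m. closed_nbhd n m x \<inter> C \<noteq> {}) \<and>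
     (\<forall>x \<in> verts n m. \<forall>y \<in> verts n m. x \<noteq> y \<longrightarrow>
        closed_nbhd n m x \<inter> C \<noteq> closed_nbhd n m y \<inter> C)"

definition col :: "nat \<Rightarrow> nat \<Rightarrow> (nat \<times> nat) set" where
  "col m i = {(i, t) | t. t \<in> {1..m}}"

definition row :: "nat \<Rightarrow> nat \<Rightarrow> (nat \<times> nat) set" where
  "row n r = {(k, r) | k. k \<in> {1..n}}"

definition cs :: "nat \<Rightarrow> nat \<Rightarrow> (nat \<times> nat) set \<Rightarrow> nat" where
  "cs n m C = card {i \<in> {1..n}. C \<inter> col m i \<noteq> {}}"

definition rs :: "nat \<Rightarrow> nat \<Rightarrow> (nat \<times> nat) set \<Rightarrow> nat" where
  "rs n m C = card {r \<in> {1..m}. C \<inter> row n r \<noteq> {}}"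

definition col_isolated :: "nat \<Rightarrow> nat \<Rightarrow> (nat \<times> nat) set \<Rightarrow> nat \<times> nat \<Rightarrow> bool" where
  "col_isolated n m C v \<longleftrightarrow> C \<inter> col m (fst v) = {v}"

definition row_isolated :: "nat \<Rightarrow> nat \<Rightarrow> (nat \<times> nat) set \<Rightarrow> nat \<times> nat \<Rightarrow> bool" where
  "row_isolated n m C v \<longleftrightarrow> C \<inter> row n (snd v) = {v}"

end

theory Submission
  imports Defs
begin

(* Let C be an identifying code with cs(C) = n - 1 and suppose
   C meets column j exactly in u = (j,a) and v = (j,b), both row-isolated.
   Some column k contains no codeword.  Then the vertex w = (k,b) and u have the
   same trace on C: w sees every codeword outside row b, i.e. C - {v}; u sees
   itself and every codeword outside column j and row a, which is again C - {v}.
   Since w and u are distinct, C would not separate them -- a contradiction. *)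

lemma col_iff: "x \<in> col m i \<longleftrightarrow> fst x = i \<and> snd x \<in> {1..m}"
  by (cases x) (auto simp: col_def)

lemma row_iff: "x \<in> row n r \<longleftrightarrow> snd x = r \<and> fst x \<in> {1..n}"
  by (cases x) (auto simp: row_def)

lemma closed_nbhd_trace:
  assumes "C \<subseteq> verts n m"
  shows "closed_nbhd n m x \<inter> C = {y \<in> C. y = x \<or> (fst y \<noteq> fst x \<and> snd y \<noteq> snd x)}"
  using assms by (auto simp: closed_nbhd_def adj_def)

lemma row_isolated_unique:
  assumes "C \<subseteq> verts n m" and "row_isolated n m C u" and "y \<in> C" and "snd y = snd u"
  shows "y = u"
proof -
  have "y \<in> C \<inter> row n (snd u)"
    using assms(1,3,4) by (auto simp: row_iff verts_def)
  then show ?thesis using assms(2) unfolding row_isolated_def by blast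
qed

lemma empty_column_exists:
  assumes "C \<subseteq> verts n m" and "cs n m C < n"
  obtains k where "k \<in> {1..n}" and "\<forall>y \<in> C. fst y \<noteq> k"
proof -
  let ?S = "{i \<in> {1..n}. C \<inter> col m i \<noteq> {}}"
  have "?S \<noteq> {1..n}" using assms(2) unfolding cs_def by auto
  then obtain k where k: "k \<in> {1..n}" "k \<notin> ?S" by blast
  have "\<forall>y \<in> C. fst y \<noteq> k"
    using k assms(1) by (force simp: col_iff verts_def)
  with k that show thesis by blast
qed

text \<open>With n - 1 occupied columns, no column holds exactly two codewords that are
  both row-isolated: the vertex in an empty column on the row of one of them is
  not separated from the other.\<close>

lemma no_column_pair_of_row_isolated:
  assumes code: "is_identifying_code n m C" and cs: "cs n m C = n - 1"
    and j: "j \<in> {1..n}" and uv: "u \<noteq> v" and col_j: "C \<inter> col m j = {u, v}"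
    and iso_u: "row_isolated n m C u" and iso_v: "row_isolated n m C v"
  shows False
proof -
  have sub: "C \<subseteq> verts n m" using code by (simp add: is_identifying_code_def)
  have "u \<in> C" "v \<in> C" and fst_uv: "fst u = j" "fst v = j"
    using col_j by (auto simp: col_iff)
  have row_u: "y = u" if "y \<in> C" "snd y = snd u" for y
    using row_isolated_unique[OF sub iso_u that] .
  have row_v: "y = v" if "y \<in> C" "snd y = snd v" for y
    using row_isolated_unique[OF sub iso_v that] .
  have column_j: "y = u \<or> y = v" if "y \<in> C" "fst y = j" for y
  proof -
    have "y \<in> C \<inter> col m j" using that sub by (auto simp: col_iff verts_def)
    then show ?thesis using col_j by blast
  qed
  have "cs n m C < n" using cs j by simp
  then obtain k where k: "k \<in> {1..n}" and empty_k: "\<forall>y \<in> C. fst y \<noteq> k"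
    using empty_column_exists sub by blast
  define w where "w = (k, snd v)"
  have w: "w \<in> verts n m" "w \<notin> C"
    using k \<open>v \<in> C\<close> sub empty_k by (auto simp: w_def verts_def)
  have "closed_nbhd n m w \<inter> C = C - {v}"
  proof (rule set_eqI)
    fix y
    show "y \<in> closed_nbhd n m w \<inter> C \<longleftrightarrow> y \<in> C - {v}"
      using w(2) empty_k row_v[of y]
      unfolding closed_nbhd_trace[OF sub] w_def by auto
  qed
  moreover have "closed_nbhd n m u \<inter> C = C - {v}"
  proof (rule set_eqI)
    fix y
    show "y \<in> closed_nbhd n m u \<inter> C \<longleftrightarrow> y \<in> C - {v}"
      using column_j[of y] row_u[of y] fst_uv uv
      unfolding closed_nbhd_trace[OF sub] by auto
  qed
  moreover have "w \<noteq> u" using w(2) \<open>u \<in> C\<close> by blast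
  ultimately show False
    using code w(1) \<open>u \<in> C\<close> sub unfolding is_identifying_code_def by blast
qed

lemma verts_swap: "prod.swap ` verts n m = verts m n"
  by (auto simp: verts_def)

lemma closed_nbhd_swap:
  "closed_nbhd m n (prod.swap x) = prod.swap ` closed_nbhd n m x"
proof (rule set_eqI)
  fix y :: "nat \<times> nat"
  show "y \<in> closed_nbhd m n (prod.swap x) \<longleftrightarrow> y \<in> prod.swap ` closed_nbhd n m x"
    by (cases x, cases y) (auto simp: closed_nbhd_def adj_def verts_def)
qed

lemma closed_nbhd_trace_swap:
  "closed_nbhd m n (prod.swap x) \<inter> prod.swap ` C = prod.swap ` (closed_nbhd n m x \<inter> C)"
  by (simp add: closed_nbhd_swap image_Int)

lemma identifying_code_swap:
  assumes code: "is_identifying_code n m C"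
  shows "is_identifying_code m n (prod.swap ` C)"
  unfolding is_identifying_code_def
proof (intro conjI ballI impI)
  have "C \<subseteq> verts n m" using code by (simp add: is_identifying_code_def)
  then have "prod.swap ` C \<subseteq> prod.swap ` verts n m" by (rule image_mono)
  then show "prod.swap ` C \<subseteq> verts m n" by (simp only: verts_swap)
next
  fix x assume "x \<in> verts m n"
  then have "prod.swap x \<in> verts n m" by (auto simp: verts_def)
  then have "closed_nbhd n m (prod.swap x) \<inter> C \<noteq> {}"
    using code by (simp add: is_identifying_code_def)
  then show "closed_nbhd m n x \<inter> prod.swap ` C \<noteq> {}"
    using closed_nbhd_trace_swap[of m n "prod.swap x" C] by simp
next
  fix x y assume "x \<in> verts m n" "y \<in> verts m n" "x \<noteq> y"
  then have "prod.swap x \<in> verts n m" "prod.swap y \<in> verts n m"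
    "prod.swap x \<noteq> prod.swap y" by (auto simp: verts_def)
  then have "closed_nbhd n m (prod.swap x) \<inter> C \<noteq> closed_nbhd n m (prod.swap y) \<inter> C"
    using code by (simp add: is_identifying_code_def)
  then show "closed_nbhd m n x \<inter> prod.swap ` C \<noteq> closed_nbhd m n y \<inter> prod.swap ` C"
    using closed_nbhd_trace_swap[of m n "prod.swap x" C]
      closed_nbhd_trace_swap[of m n "prod.swap y" C]
    by (simp add: inj_image_eq_iff)
qed

lemma row_swap: "prod.swap ` row n r = col n r"
  by (force simp: row_def col_def)

lemma swap_inter_row: "prod.swap ` C \<inter> col n r = prod.swap ` (C \<inter> row n r)"
  by (simp add: image_Int row_swap[symmetric])

lemma rs_swap: "rs n m C = cs m n (prod.swap ` C)"
  by (simp add: rs_def cs_def swap_inter_row)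

lemma col_isolated_swap:
  "col_isolated n m C u \<longleftrightarrow> row_isolated m n (prod.swap ` C) (prod.swap u)"
proof -
  have "prod.swap ` C \<inter> row m (fst u) = prod.swap ` (C \<inter> col m (fst u))"
    by (force simp: row_def col_def)
  then show ?thesis
    unfolding col_isolated_def row_isolated_def
    using inj_image_eq_iff[OF inj_swap, of "C \<inter> col m (fst u)" "{u}"] by simp
qed

text \<open>The row statement is the column statement for the transposed code.\<close>

lemma no_row_pair_of_col_isolated:
  assumes code: "is_identifying_code n m C" and rs: "rs n m C = m - 1"
    and r: "r \<in> {1..m}" and uv: "u \<noteq> v" and row_r: "C \<inter> row n r = {u, v}"
    and iso_u: "col_isolated n m C u" and iso_v: "col_isolated n m C v"
  shows False
proof (rule no_column_pair_of_row_isolated)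
  show "is_identifying_code m n (prod.swap ` C)" using code by (rule identifying_code_swap)
  show "cs m n (prod.swap ` C) = m - 1" using rs by (simp add: rs_swap)
  show "prod.swap ` C \<inter> col n r = {prod.swap u, prod.swap v}"
    using row_r by (simp add: swap_inter_row)
  show "prod.swap u \<noteq> prod.swap v" using uv by (metis swap_swap)
  show "row_isolated m n (prod.swap ` C) (prod.swap u)"
    using iso_u by (simp add: col_isolated_swap)
  show "row_isolated m n (prod.swap ` C) (prod.swap v)"
    using iso_v by (simp add: col_isolated_swap)
qed (rule r)

theorem mainTheorem10:
  fixes n m :: nat and C :: "(nat \<times> nat) set"
  assumes "is_identifying_code n m C"
  shows "(cs n m C = n - 1 \<longrightarrow>
            \<not> (\<exists>j \<in> {1..n}. \<exists>u v. u \<noteq> v \<and> C \<inter> col m j = {u, v} \<and>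
                 row_isolated n m C u \<and> row_isolated n m C v))
       \<and> (rs n m C = m - 1 \<longrightarrow>
            \<not> (\<exists>r \<in> {1..m}. \<exists>u v. u \<noteq> v \<and> C \<inter> row n r = {u, v} \<and>
                 col_isolated n m C u \<and> col_isolated n m C v))"
  using no_column_pair_of_row_isolated[OF assms] no_row_pair_of_col_isolated[OF assms]
  by blast

end
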